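(* Let $\{D_1,D_2,D_3\}$ be a positively oriented orthonormal basis of $\mathbb{R}^3$ and let $J$ be a symmetric positive definite linear map $\mathbb{R}^3\to\mathbb{R}^3$ having $D_3$ as an eigenvector. Let $\Lambda:[0,T]\to SO(3)$ be a smooth curve and $\mu:[0,T]\to\mathbb{R}$ a function such that, for all $t\in[0,T]$, $$\nabla_{\dot d_3}\pi_\perp+\pi_\parallel\,\dot d_3=0,\qquad \dot\pi_\parallel+\pi_\perp\cdot\dot d_3+\mu=0,\qquad w\cdot d_3=0 .$$ Then the kinetic energy $K=\tfrac12 W\cdot JW=\tfrac12 w\cdot jw$ and the quantities $$\Pi^1=D_1\cdot\Pi=d_1\cdot\pi,\qquad \Pi^2=D_2\cdot\Pi=d_2\cdot\pi$$ are constant on $[0,T]$.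
   Context: Notation: $d_i(t)=\Lambda(t)D_i$ for $i=1,2,3$. For $v\in\mathbb{R}^3$, $\hat v$ denotes the skew-symmetric matrix with $\hat v a=v\times a$. The spatial angular velocity $w$ and convected angular velocity $W$ are defined by $\dot\Lambda=\hat w\Lambda=\Lambda\hat W$ (so $W=\Lambda^Tw$). The spatial inertia is $j=\Lambda J\Lambda^T$; the spatial angular momentum is $\pi=jw$ and the convected one is $\Pi=\Lambda^T\pi=JW$. Split $\pi=\pi_\perp+\pi_\parallel d_3$ with $\pi_\parallel=\pi\cdot d_3$ and $\pi_\perp=(I-d_3\otimes d_3)\pi$. For a curve $v(t)$ with $v(t)\cdot d_3(t)=0$, the covariant derivative on the unit sphere along $d_3$ is $\nabla_{\dot d_3}v:=(I-d_3\otimes d_3)\dot v$. The condition $w\cdot d_3=0$ is the non-twisting (nonholonomic) constraint and $\mu$ is the associated Lagrange multiplier; no external moments act. *)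

theory Defs
  imports "HOL-Analysis.Analysis"
begin

definition hat :: "real^3 \<Rightarrow> real^3^3" where
  "hat v = matrix (\<lambda>a. cross3 v a)"

definition SO3 :: "(real^3^3) set" where
  "SO3 = {Q. orthogonal_matrix Q \<and> det Q = 1}"

definition smooth_on_interval :: "real \<Rightarrow> (real \<Rightarrow> 'a::real_normed_vector) \<Rightarrow> bool" where
  "smooth_on_interval T f \<longleftrightarrow>
     (\<exists>D :: nat \<Rightarrow> real \<Rightarrow> 'a. D 0 = f \<and>
        (\<forall>k. \<forall>t\<in>{0..T}. (D k has_vector_derivative D (Suc k) t) (at t within {0..T})))"

definition dt :: "real \<Rightarrow> (real \<Rightarrow> 'a::real_normed_vector) \<Rightarrow> real \<Rightarrow> 'a" where
  "dt T f t = vector_derivative f (at t within {0..T})"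

definition perp_proj :: "real^3 \<Rightarrow> real^3 \<Rightarrow> real^3" where
  "perp_proj d v = v - (v \<bullet> d) *\<^sub>R d"

end

theory Submission
  imports Defs
begin

(*
  Since D3 is an eigenvector of J and w \<bullet> d3 = 0, the spatial momentum \<pi> = j w is
  orthogonal to d3 as well. Hence \<pi>_par = 0 and \<pi>_perp = \<pi>, and the first equation of
  motion says that the derivative of \<pi> is parallel to d3. Differentiating
  \<pi> = \<Lambda> J \<Lambda>\<^sup>T w gives \<pi>' = j w' + w \<times> \<pi>, so by the symmetry of j the derivative of
  w \<bullet> \<pi> is 2 w \<bullet> \<pi>', which vanishes because w is orthogonal to d3. For i = 1, 2 the
  derivative of d_i \<bullet> \<pi> is (w \<times> d_i) \<bullet> \<pi> + d_i \<bullet> \<pi>': the second term vanishes for the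
  same reason, the first is the triple product of three vectors orthogonal to d3.
  The angular velocity w = vee (\<Lambda>' \<Lambda>\<^sup>T) is differentiable because \<Lambda> is smooth.
*)

lemma bounded_bilinear_matrix_matrix_mult:
  "bounded_bilinear ((**) :: real^'n^'m \<Rightarrow> real^'p^'n \<Rightarrow> real^'p^'m)"
  unfolding bilinear_conv_bounded_bilinear[symmetric] bilinear_def
  by (auto intro!: linearI simp: vec_eq_iff matrix_matrix_mult_def sum.distrib algebra_simps sum_distrib_left)

lemma bounded_bilinear_matrix_vector_mult:
  "bounded_bilinear ((*v) :: real^'n^'m \<Rightarrow> real^'n \<Rightarrow> real^'m)"
  unfolding bilinear_conv_bounded_bilinear[symmetric] bilinear_def
  by (auto intro!: linearI simp: vec_eq_iff matrix_vector_mult_def sum.distrib algebra_simps sum_distrib_left)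

lemma bounded_linear_transpose: "bounded_linear (transpose :: real^'n^'m \<Rightarrow> real^'m^'n)"
  unfolding linear_conv_bounded_linear[symmetric]
  by (rule linearI) (simp_all add: transpose_def vec_eq_iff)

lemma hat_mult_vec: "hat v *v a = cross3 v a"
  unfolding hat_def using bilinear_cross by (simp add: matrix_works bilinear_def)

lemma inner_matrix_vector_mult: "x \<bullet> (A *v y) = (transpose A *v x) \<bullet> (y::real^'n)"
  by (metis dot_lmul_matrix transpose_matrix_vector)

lemma transpose_hat_mult_vec: "transpose (hat v) *v a = cross3 a v"
proof -
  have "(transpose (hat v) *v a) \<bullet> y = cross3 a v \<bullet> y" for y
    unfolding inner_matrix_vector_mult[symmetric] hat_mult_vec by (simp add: cross3_simps)
  then show ?thesis
    using vector_eq_rdot by blast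
qed

lemma triple_product_scaleR:
  "(cross3 a b \<bullet> c) *\<^sub>R d = (a \<bullet> d) *\<^sub>R cross3 b c + (b \<bullet> d) *\<^sub>R cross3 c a + (c \<bullet> d) *\<^sub>R cross3 a b"
  unfolding vec_eq_iff forall_3 by (simp add: cross3_simps)

lemma cross3_inner_eq_0_if_coplanar:
  assumes "a \<bullet> d = 0" "b \<bullet> d = 0" "c \<bullet> d = 0" "d \<noteq> 0"
  shows "cross3 a b \<bullet> c = 0"
  using triple_product_scaleR[of a b c d] assms by simp

definition vee :: "real^3^3 \<Rightarrow> real^3" where
  "vee M = vector [M$3$2, M$1$3, M$2$1]"

lemma vee_hat: "vee (hat v) = v"
  by (simp add: vee_def hat_def matrix_def cross3_def axis_def vec_eq_iff forall_3 vector_def)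

lemma bounded_linear_vee: "bounded_linear vee"
  unfolding linear_conv_bounded_linear[symmetric]
  by (rule linearI) (simp_all add: vee_def vec_eq_iff forall_3 vector_def)

lemma orthogonal_matrix_inner:
  "orthogonal_matrix Q \<Longrightarrow> (Q *v x) \<bullet> (Q *v y) = x \<bullet> (y :: real^'n)"
  by (metis inner_matrix_vector_mult matrix_vector_mul_assoc matrix_vector_mul_lid orthogonal_matrix_def)

lemma spatial_momentum_orthogonal_axis:
  fixes Q J :: "real^'n^'n"
  assumes "orthogonal_matrix Q" "transpose J = J" "J *v D = c *\<^sub>R D" "w \<bullet> (Q *v D) = 0"
  shows "(Q ** J ** transpose Q *v w) \<bullet> (Q *v D) = 0"
proof -
  have "(Q ** J ** transpose Q *v w) \<bullet> (Q *v D) = (J *v (transpose Q *v w)) \<bullet> D"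
    by (simp only: matrix_vector_mul_assoc[symmetric] orthogonal_matrix_inner[OF assms(1)])
  also have "\<dots> = c * (w \<bullet> (Q *v D))"
    using assms(2,3) by (metis inner_matrix_vector_mult inner_scaleR_right)
  finally show ?thesis using assms(4) by simp
qed

lemma dt_eqI:
  fixes f :: "real \<Rightarrow> 'a::euclidean_space"
  assumes "0 < T" "t \<in> {0..T}" "(f has_vector_derivative f') (at t within {0..T})"
  shows "dt T f t = f'"
  unfolding dt_def using vector_derivative_within_closed_interval assms .

lemma smooth_on_interval_second_derivative:
  fixes f :: "real \<Rightarrow> 'a::euclidean_space"
  assumes "smooth_on_interval T f" "0 < T"
    and f': "\<And>t. t \<in> {0..T} \<Longrightarrow> (f has_vector_derivative f' t) (at t within {0..T})"
  obtains f'' where "\<And>t. t \<in> {0..T} \<Longrightarrow> (f' has_vector_derivative f'' t) (at t within {0..T})"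
proof -
  obtain D where D0: "D 0 = f"
    and D: "\<And>k t. t \<in> {0..T} \<Longrightarrow> (D k has_vector_derivative D (Suc k) t) (at t within {0..T})"
    using assms(1) unfolding smooth_on_interval_def by blast
  have "D 1 t = f' t" if "t \<in> {0..T}" for t
  proof -
    have "vector_derivative f (at t within {0..T}) = D 1 t"
      using vector_derivative_within_closed_interval[OF \<open>0 < T\<close> that] D[OF that, of 0] D0 by simp
    then show ?thesis
      using vector_derivative_within_closed_interval[OF \<open>0 < T\<close> that f'[OF that]] by simp
  qed
  then have "(f' has_vector_derivative D 2 t) (at t within {0..T})" if "t \<in> {0..T}" for t
    using has_vector_derivative_transform[OF that _ D[OF that, of 1]] by (simp add: numeral_2_eq_2)
  then show thesis by (rule that)
qed

lemma frame_vector_has_derivative: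
  assumes "(\<Lambda> has_vector_derivative hat \<omega> ** \<Lambda> x) (at x within S)"
  shows "((\<lambda>t. \<Lambda> t *v D) has_vector_derivative cross3 \<omega> (\<Lambda> x *v D)) (at x within S)"
  using bounded_bilinear.has_vector_derivative[OF bounded_bilinear_matrix_vector_mult assms
      has_vector_derivative_const]
  by (simp add: matrix_vector_mul_assoc[symmetric] hat_mult_vec)

lemma angular_velocity_has_derivative:
  assumes "x \<in> S" and orthogonal: "\<And>t. t \<in> S \<Longrightarrow> orthogonal_matrix (\<Lambda> t)"
    and \<Lambda>': "(\<Lambda> has_vector_derivative hat (w x) ** \<Lambda> x) (at x within S)"
    and \<Lambda>'': "((\<lambda>t. hat (w t) ** \<Lambda> t) has_vector_derivative L) (at x within S)"
  shows "(w has_vector_derivative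
           vee (hat (w x) ** \<Lambda> x ** transpose (hat (w x) ** \<Lambda> x) + L ** transpose (\<Lambda> x)))
         (at x within S)"
proof -
  have "w t = vee (hat (w t) ** \<Lambda> t ** transpose (\<Lambda> t))" if "t \<in> S" for t
    using orthogonal[OF that] by (simp add: orthogonal_matrix_def matrix_mul_assoc[symmetric] vee_hat)
  moreover have "((\<lambda>t. vee (hat (w t) ** \<Lambda> t ** transpose (\<Lambda> t))) has_vector_derivative
      vee (hat (w x) ** \<Lambda> x ** transpose (hat (w x) ** \<Lambda> x) + L ** transpose (\<Lambda> x))) (at x within S)"
    by (intro bounded_linear.has_vector_derivative[OF bounded_linear_vee]
        bounded_bilinear.has_vector_derivative[OF bounded_bilinear_matrix_matrix_mult \<Lambda>''
          bounded_linear.has_vector_derivative[OF bounded_linear_transpose \<Lambda>']])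
  ultimately show ?thesis
    by (rule has_vector_derivative_transform[OF \<open>x \<in> S\<close>])
qed

lemma angular_velocity_differentiable:
  assumes "smooth_on_interval T \<Lambda>" "0 < T"
    and orthogonal: "\<And>t. t \<in> {0..T} \<Longrightarrow> orthogonal_matrix (\<Lambda> t)"
    and \<Lambda>': "\<And>t. t \<in> {0..T} \<Longrightarrow> (\<Lambda> has_vector_derivative hat (w t) ** \<Lambda> t) (at t within {0..T})"
  obtains w' where "\<And>t. t \<in> {0..T} \<Longrightarrow> (w has_vector_derivative w' t) (at t within {0..T})"
proof -
  obtain L where L: "\<And>t. t \<in> {0..T} \<Longrightarrow>
      ((\<lambda>t. hat (w t) ** \<Lambda> t) has_vector_derivative L t) (at t within {0..T})"
    using smooth_on_interval_second_derivative[OF assms(1,2) \<Lambda>'] by blast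
  have "(w has_vector_derivative
          vee (hat (w t) ** \<Lambda> t ** transpose (hat (w t) ** \<Lambda> t) + L t ** transpose (\<Lambda> t)))
        (at t within {0..T})" if "t \<in> {0..T}" for t
    using angular_velocity_has_derivative[OF that orthogonal \<Lambda>'[OF that] L[OF that]] .
  then show thesis by (rule that)
qed

lemma spatial_momentum_has_derivative:
  fixes J :: "real^3^3"
  assumes \<Lambda>': "(\<Lambda> has_vector_derivative hat (w x) ** \<Lambda> x) (at x within S)"
    and w': "(w has_vector_derivative w') (at x within S)"
  shows "((\<lambda>t. \<Lambda> t ** J ** transpose (\<Lambda> t) *v w t) has_vector_derivative
           \<Lambda> x ** J ** transpose (\<Lambda> x) *v w' + cross3 (w x) (\<Lambda> x ** J ** transpose (\<Lambda> x) *v w x))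
         (at x within S)"
proof -
  have "transpose (hat (w x) ** \<Lambda> x) *v w x = 0"
    by (simp only: matrix_transpose_mul matrix_vector_mul_assoc[symmetric] transpose_hat_mult_vec
        cross_refl matrix_vector_mult_0_right)
  then have "((\<lambda>t. transpose (\<Lambda> t) *v w t) has_vector_derivative transpose (\<Lambda> x) *v w')
      (at x within S)"
    using bounded_bilinear.has_vector_derivative[OF bounded_bilinear_matrix_vector_mult
        bounded_linear.has_vector_derivative[OF bounded_linear_transpose \<Lambda>'] w']
    by simp
  then have "((\<lambda>t. \<Lambda> t *v (J *v (transpose (\<Lambda> t) *v w t))) has_vector_derivative
      \<Lambda> x *v (J *v (transpose (\<Lambda> x) *v w')) + hat (w x) ** \<Lambda> x *v (J *v (transpose (\<Lambda> x) *v w x)))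
      (at x within S)"
    by (intro bounded_bilinear.has_vector_derivative[OF bounded_bilinear_matrix_vector_mult \<Lambda>']
        matrix_vector_mul_bounded_linear[THEN bounded_linear.has_vector_derivative])
  then show ?thesis
    by (simp add: matrix_vector_mul_assoc[symmetric] hat_mult_vec)
qed

locale nonholonomic_rigid_body =
  fixes S :: "real set" and \<Lambda> :: "real \<Rightarrow> real^3^3" and J :: "real^3^3" and D3 :: "real^3"
    and w w' \<pi> :: "real \<Rightarrow> real^3"
  assumes convex: "convex S"
    and orthogonal: "\<And>t. t \<in> S \<Longrightarrow> orthogonal_matrix (\<Lambda> t)"
    and angular_velocity: "\<And>t. t \<in> S \<Longrightarrow> (\<Lambda> has_vector_derivative hat (w t) ** \<Lambda> t) (at t within S)"
    and angular_acceleration: "\<And>t. t \<in> S \<Longrightarrow> (w has_vector_derivative w' t) (at t within S)"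
    and inertia_symmetric: "transpose J = J"
    and inertia_axis: "\<exists>c. J *v D3 = c *\<^sub>R D3"
    and axis_nonzero: "D3 \<noteq> 0"
    and momentum_def: "\<And>t. \<pi> t = \<Lambda> t ** J ** transpose (\<Lambda> t) *v w t"
    and non_twisting: "\<And>t. t \<in> S \<Longrightarrow> w t \<bullet> (\<Lambda> t *v D3) = 0"
    \<comment> \<open>the first equation of motion, once \<pi>_par = 0 and \<pi>' is computed as in
        \<open>spatial_momentum_has_derivative\<close>\<close>
    and momentum_balance: "\<And>t. t \<in> S \<Longrightarrow>
      perp_proj (\<Lambda> t *v D3) (\<Lambda> t ** J ** transpose (\<Lambda> t) *v w' t + cross3 (w t) (\<pi> t)) = 0"
begin

lemma momentum_has_derivative:
  assumes "t \<in> S"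
  shows "(\<pi> has_vector_derivative
           \<Lambda> t ** J ** transpose (\<Lambda> t) *v w' t + cross3 (w t) (\<pi> t)) (at t within S)"
  using spatial_momentum_has_derivative[OF angular_velocity[OF assms] angular_acceleration[OF assms]]
  by (simp add: momentum_def[abs_def])

lemma momentum_orthogonal_axis: "t \<in> S \<Longrightarrow> \<pi> t \<bullet> (\<Lambda> t *v D3) = 0"
  using inertia_axis spatial_momentum_orthogonal_axis[OF orthogonal inertia_symmetric _ non_twisting]
  by (auto simp: momentum_def)

lemma inner_momentum_rate_eq_0:
  assumes "t \<in> S" "v \<bullet> (\<Lambda> t *v D3) = 0"
  shows "v \<bullet> (\<Lambda> t ** J ** transpose (\<Lambda> t) *v w' t + cross3 (w t) (\<pi> t)) = 0"
proof -
  let ?d = "\<Lambda> t *v D3" and ?p = "\<Lambda> t ** J ** transpose (\<Lambda> t) *v w' t + cross3 (w t) (\<pi> t)"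
  have "?p = (?p \<bullet> ?d) *\<^sub>R ?d"
    using momentum_balance[OF assms(1)] by (simp add: perp_proj_def)
  then show ?thesis
    by (metis assms(2) inner_scaleR_right mult_zero_right)
qed

lemma kinetic_energy_conserved:
  assumes "s \<in> S" "t \<in> S"
  shows "w s \<bullet> \<pi> s = w t \<bullet> \<pi> t"
proof -
  have "((\<lambda>t. w t \<bullet> \<pi> t) has_vector_derivative 0) (at t within S)" if "t \<in> S" for t
  proof -
    let ?j = "\<Lambda> t ** J ** transpose (\<Lambda> t)"
    have "transpose ?j = ?j"
      by (simp add: matrix_transpose_mul inertia_symmetric matrix_mul_assoc)
    have "w' t \<bullet> \<pi> t = (?j *v w' t) \<bullet> w t"
      by (simp only: momentum_def inner_matrix_vector_mult \<open>transpose ?j = ?j\<close>)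
    also have "\<dots> = w t \<bullet> (?j *v w' t + cross3 (w t) (\<pi> t))"
      by (simp add: inner_add_right dot_cross_self inner_commute)
    finally show ?thesis
      using bounded_bilinear.has_vector_derivative[OF bounded_bilinear_inner
          angular_acceleration[OF that] momentum_has_derivative[OF that]]
        inner_momentum_rate_eq_0[OF that non_twisting[OF that]]
      by simp
  qed
  then obtain c where "\<And>t. t \<in> S \<Longrightarrow> w t \<bullet> \<pi> t = c"
    using has_vector_derivative_zero_constant[OF convex] by blast
  then show ?thesis using assms by simp
qed

lemma frame_momentum_conserved:
  assumes "D \<bullet> D3 = 0" "s \<in> S" "t \<in> S"
  shows "(\<Lambda> s *v D) \<bullet> \<pi> s = (\<Lambda> t *v D) \<bullet> \<pi> t"
proof -
  have "((\<lambda>t. (\<Lambda> t *v D) \<bullet> \<pi> t) has_vector_derivative 0) (at t within S)" if "t \<in> S" for t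
  proof -
    have D_perp: "(\<Lambda> t *v D) \<bullet> (\<Lambda> t *v D3) = 0"
      using assms(1) orthogonal_matrix_inner[OF orthogonal[OF that]] by simp
    have "\<Lambda> t *v D3 \<noteq> 0"
      using axis_nonzero orthogonal_matrix_inner[OF orthogonal[OF that], of D3 D3] by auto
    then have "cross3 (w t) (\<Lambda> t *v D) \<bullet> \<pi> t = 0"
      using cross3_inner_eq_0_if_coplanar[OF non_twisting[OF that] D_perp] momentum_orthogonal_axis[OF that]
      by blast
    then show ?thesis
      using bounded_bilinear.has_vector_derivative[OF bounded_bilinear_inner
          frame_vector_has_derivative[OF angular_velocity[OF that], where D = D] momentum_has_derivative[OF that]]
        inner_momentum_rate_eq_0[OF that D_perp]
      by simp
  qed
  then obtain c where "\<And>t. t \<in> S \<Longrightarrow> (\<Lambda> t *v D) \<bullet> \<pi> t = c"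
    using has_vector_derivative_zero_constant[OF convex] by blast
  then show ?thesis using assms(2,3) by simp
qed

end

lemma equations_of_motion_imp_nonholonomic_rigid_body:
  fixes \<Lambda> :: "real \<Rightarrow> real^3^3" and w \<pi> \<pi>_perp d3 :: "real \<Rightarrow> real^3" and \<pi>_par :: "real \<Rightarrow> real"
  assumes T: "0 < T" and smooth: "smooth_on_interval T \<Lambda>"
    and orthogonal: "\<And>t. t \<in> {0..T} \<Longrightarrow> orthogonal_matrix (\<Lambda> t)"
    and angular_velocity:
      "\<And>t. t \<in> {0..T} \<Longrightarrow> (\<Lambda> has_vector_derivative hat (w t) ** \<Lambda> t) (at t within {0..T})"
    and inertia_symmetric: "transpose J = J" and inertia_axis: "\<exists>c. J *v D3 = c *\<^sub>R D3"
    and axis_nonzero: "D3 \<noteq> 0"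
    and momentum_def: "\<And>t. \<pi> t = \<Lambda> t ** J ** transpose (\<Lambda> t) *v w t"
    and d3_def: "\<And>t. d3 t = \<Lambda> t *v D3"
    and \<pi>_perp_def: "\<And>t. \<pi>_perp t = perp_proj (d3 t) (\<pi> t)"
    and \<pi>_par_def: "\<And>t. \<pi>_par t = \<pi> t \<bullet> d3 t"
    and covariant_balance:
      "\<And>t. t \<in> {0..T} \<Longrightarrow> perp_proj (d3 t) (dt T \<pi>_perp t) + \<pi>_par t *\<^sub>R dt T d3 t = 0"
    and non_twisting: "\<And>t. t \<in> {0..T} \<Longrightarrow> w t \<bullet> d3 t = 0"
  obtains w' where "nonholonomic_rigid_body {0..T} \<Lambda> J D3 w w' \<pi>"
proof -
  obtain w' where w': "\<And>t. t \<in> {0..T} \<Longrightarrow> (w has_vector_derivative w' t) (at t within {0..T})"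
    using angular_velocity_differentiable[OF smooth T orthogonal angular_velocity] by metis
  obtain c where c: "J *v D3 = c *\<^sub>R D3"
    using inertia_axis by blast
  have \<pi>_axis: "\<pi> t \<bullet> d3 t = 0" if "t \<in> {0..T}" for t
    using spatial_momentum_orthogonal_axis[OF orthogonal[OF that] inertia_symmetric c]
      non_twisting[OF that]
    by (simp add: momentum_def d3_def)
  have balance: "perp_proj (\<Lambda> t *v D3) (\<Lambda> t ** J ** transpose (\<Lambda> t) *v w' t + cross3 (w t) (\<pi> t)) = 0"
    if "t \<in> {0..T}" for t
  proof -
    have "(\<pi> has_vector_derivative
        \<Lambda> t ** J ** transpose (\<Lambda> t) *v w' t + cross3 (w t) (\<pi> t)) (at t within {0..T})"
      using spatial_momentum_has_derivative[OF angular_velocity[OF that] w'[OF that]]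
      by (simp add: momentum_def[abs_def])
    then have "(\<pi>_perp has_vector_derivative
        \<Lambda> t ** J ** transpose (\<Lambda> t) *v w' t + cross3 (w t) (\<pi> t)) (at t within {0..T})"
      by (rule has_vector_derivative_transform[OF that, rotated])
        (simp add: \<pi>_perp_def perp_proj_def \<pi>_axis)
    then have "dt T \<pi>_perp t = \<Lambda> t ** J ** transpose (\<Lambda> t) *v w' t + cross3 (w t) (\<pi> t)"
      by (rule dt_eqI[OF T that])
    then show ?thesis
      using covariant_balance[OF that] \<pi>_axis[OF that] by (simp add: \<pi>_par_def d3_def)
  qed
  show thesis
  proof (rule that, unfold_locales)
    show "convex {0..T}" by (rule convex_real_interval)
    show "w t \<bullet> (\<Lambda> t *v D3) = 0" if "t \<in> {0..T}" for t
      using non_twisting[OF that] by (simp add: d3_def)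
  qed (fact orthogonal angular_velocity w' inertia_symmetric inertia_axis axis_nonzero momentum_def balance)+
qed

theorem theorem6:
  fixes D1 D2 D3 :: "real^3" and J :: "real^3^3" and T :: real
    and \<Lambda> :: "real \<Rightarrow> real^3^3" and w :: "real \<Rightarrow> real^3" and \<mu> :: "real \<Rightarrow> real"
    and d1 d2 d3 :: "real \<Rightarrow> real^3" and j :: "real \<Rightarrow> real^3^3"
    and W \<pi> Pic \<pi>_perp :: "real \<Rightarrow> real^3" and \<pi>_par K Pi1 Pi2 :: "real \<Rightarrow> real"
  assumes orthonormal: "norm D1 = 1" "norm D2 = 1" "norm D3 = 1"
      "D1 \<bullet> D2 = 0" "D1 \<bullet> D3 = 0" "D2 \<bullet> D3 = 0"
    and pos_oriented: "det (vector [D1, D2, D3] :: real^3^3) > 0"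
    and J_sym: "transpose J = J"
    and J_posdef: "\<forall>x. x \<noteq> 0 \<longrightarrow> x \<bullet> (J *v x) > 0"
    and J_eig: "\<exists>c. J *v D3 = c *\<^sub>R D3"
    and \<Lambda>_SO3: "\<forall>t\<in>{0..T}. \<Lambda> t \<in> SO3"
    and \<Lambda>_smooth: "smooth_on_interval T \<Lambda>"
    and w_def: "\<forall>t\<in>{0..T}. (\<Lambda> has_vector_derivative (hat (w t) ** \<Lambda> t)) (at t within {0..T})"
    and d1_def: "\<And>t. d1 t = \<Lambda> t *v D1"
    and d2_def: "\<And>t. d2 t = \<Lambda> t *v D2"
    and d3_def: "\<And>t. d3 t = \<Lambda> t *v D3"
    and W_def: "\<And>t. W t = transpose (\<Lambda> t) *v w t"
    and j_def: "\<And>t. j t = \<Lambda> t ** J ** transpose (\<Lambda> t)"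
    and \<pi>_def: "\<And>t. \<pi> t = j t *v w t"
    and Pic_def: "\<And>t. Pic t = transpose (\<Lambda> t) *v \<pi> t"
    and \<pi>_par_def: "\<And>t. \<pi>_par t = \<pi> t \<bullet> d3 t"
    and \<pi>_perp_def: "\<And>t. \<pi>_perp t = perp_proj (d3 t) (\<pi> t)"
    and K_def: "\<And>t. K t = (1/2) * (W t \<bullet> (J *v W t))"
    and Pi1_def: "\<And>t. Pi1 t = D1 \<bullet> Pic t"
    and Pi2_def: "\<And>t. Pi2 t = D2 \<bullet> Pic t"
    and eq1: "\<forall>t\<in>{0..T}. perp_proj (d3 t) (dt T \<pi>_perp t) + \<pi>_par t *\<^sub>R dt T d3 t = 0"
    and eq2: "\<forall>t\<in>{0..T}. dt T \<pi>_par t + \<pi>_perp t \<bullet> dt T d3 t + \<mu> t = 0"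
    and eq3: "\<forall>t\<in>{0..T}. w t \<bullet> d3 t = 0"
  shows "\<forall>s\<in>{0..T}. \<forall>t\<in>{0..T}.
           K s = K t \<and> (1/2) * (w s \<bullet> (j s *v w s)) = (1/2) * (w t \<bullet> (j t *v w t))
           \<and> Pi1 s = Pi1 t \<and> d1 s \<bullet> \<pi> s = d1 t \<bullet> \<pi> t
           \<and> Pi2 s = Pi2 t \<and> d2 s \<bullet> \<pi> s = d2 t \<bullet> \<pi> t"
proof (intro ballI)
  fix s t assume s: "s \<in> {0..T}" and t: "t \<in> {0..T}"
  have K_eq: "K x = (1/2) * (w x \<bullet> \<pi> x)" for x
    by (simp only: K_def W_def \<pi>_def j_def matrix_vector_mul_assoc[symmetric] inner_matrix_vector_mult)
  have Pi_eq: "Pi1 x = d1 x \<bullet> \<pi> x" "Pi2 x = d2 x \<bullet> \<pi> x" for x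
    by (simp_all only: Pi1_def Pi2_def Pic_def d1_def d2_def inner_matrix_vector_mult transpose_transpose)
  have "w s \<bullet> \<pi> s = w t \<bullet> \<pi> t \<and> d1 s \<bullet> \<pi> s = d1 t \<bullet> \<pi> t \<and> d2 s \<bullet> \<pi> s = d2 t \<bullet> \<pi> t"
  proof (cases "T = 0")
    case True
    with s t show ?thesis by simp
  next
    case False
    with s have "0 < T" by simp
    moreover have "orthogonal_matrix (\<Lambda> x)" if "x \<in> {0..T}" for x
      using \<Lambda>_SO3 that by (simp add: SO3_def)
    moreover have "D3 \<noteq> 0" "\<pi> x = \<Lambda> x ** J ** transpose (\<Lambda> x) *v w x" for x
      using orthonormal(3) by (auto simp: \<pi>_def j_def)
    ultimately obtain w' where "nonholonomic_rigid_body {0..T} \<Lambda> J D3 w w' \<pi>"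
      using equations_of_motion_imp_nonholonomic_rigid_body[OF _ \<Lambda>_smooth _ w_def[rule_format] J_sym J_eig
          _ _ d3_def \<pi>_perp_def \<pi>_par_def eq1[rule_format] eq3[rule_format]]
      by blast
    then interpret nonholonomic_rigid_body "{0..T}" \<Lambda> J D3 w w' \<pi> .
    show ?thesis
      using kinetic_energy_conserved[OF s t] frame_momentum_conserved[OF orthonormal(5) s t]
        frame_momentum_conserved[OF orthonormal(6) s t]
      by (simp add: d1_def d2_def)
  qed
  then show "K s = K t \<and> (1/2) * (w s \<bullet> (j s *v w s)) = (1/2) * (w t \<bullet> (j t *v w t))
           \<and> Pi1 s = Pi1 t \<and> d1 s \<bullet> \<pi> s = d1 t \<bullet> \<pi> t
           \<and> Pi2 s = Pi2 t \<and> d2 s \<bullet> \<pi> s = d2 t \<bullet> \<pi> t"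
    by (simp add: K_eq Pi_eq \<pi>_def[symmetric])
qed

end
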